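(* Let $G$ be a finite connected interval graph and $z$ any vertex of $G$. Then $\mathrm{imp}(G)\ge \mathrm{wt}(z)$.
   Context: A finite simple graph $G=(V,E)$ is an interval graph iff there is a representation $\alpha: v\mapsto I_v$ of the vertices by (closed, bounded) intervals of the real line such that $vw\in E$ iff $I_v\cap I_w\neq\emptyset$. For a representation $\alpha$ and a vertex $z$, the impropriety $\mathrm{imp}_\alpha(z)$ is the number of representing intervals $I_w$, $w\neq z$, with $I_w\subseteq I_z$. The impropriety $\mathrm{imp}(\alpha)$ is $\max_z \mathrm{imp}_\alpha(z)$, and $\mathrm{imp}(G)$ is the minimum of $\mathrm{imp}(\alpha)$ over all interval representations $\alpha$ of $G$. A local component at $z$ is a connected component of $G\setminus\{z\}$; it is exterior iff it contains a vertex not adjacent to $z$ (there are at most two exterior local components at any vertex of an interval graph). If $z$ has $n$ local components, the weight $\mathrm{wt}(z)$ is the sum of the $n-2$ smallest orders (numbers of vertices) among the non-exterior local components at $z$ (an empty sum, i.e. $0$, if $n\le 2$). *)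

theory Defs
  imports Complex_Main "HOL-Library.Multiset"
begin

definition simple_graph :: "'a set \<Rightarrow> ('a \<Rightarrow> 'a \<Rightarrow> bool) \<Rightarrow> bool" where
  "simple_graph V E \<longleftrightarrow> finite V \<and> (\<forall>x y. E x y \<longrightarrow> E y x) \<and> (\<forall>x. \<not> E x x)
      \<and> (\<forall>x y. E x y \<longrightarrow> x \<in> V \<and> y \<in> V)"

definition reach_in :: "('a \<Rightarrow> 'a \<Rightarrow> bool) \<Rightarrow> 'a set \<Rightarrow> 'a \<Rightarrow> 'a \<Rightarrow> bool" where
  "reach_in E S = (\<lambda>x y. x \<in> S \<and> y \<in> S \<and> E x y)\<^sup>*\<^sup>*"

definition connected_graph :: "'a set \<Rightarrow> ('a \<Rightarrow> 'a \<Rightarrow> bool) \<Rightarrow> bool" where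
  "connected_graph V E \<longleftrightarrow> V \<noteq> {} \<and> (\<forall>x\<in>V. \<forall>y\<in>V. reach_in E V x y)"

definition components_in :: "('a \<Rightarrow> 'a \<Rightarrow> bool) \<Rightarrow> 'a set \<Rightarrow> 'a set set" where
  "components_in E S = (\<lambda>x. {y \<in> S. reach_in E S x y}) ` S"

definition interval_rep :: "'a set \<Rightarrow> ('a \<Rightarrow> 'a \<Rightarrow> bool) \<Rightarrow> ('a \<Rightarrow> real set) \<Rightarrow> bool" where
  "interval_rep V E I \<longleftrightarrow>
     (\<forall>v\<in>V. \<exists>a b. a \<le> b \<and> I v = {a..b}) \<and>
     (\<forall>v\<in>V. \<forall>w\<in>V. v \<noteq> w \<longrightarrow> (E v w \<longleftrightarrow> I v \<inter> I w \<noteq> {}))"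

definition interval_graph :: "'a set \<Rightarrow> ('a \<Rightarrow> 'a \<Rightarrow> bool) \<Rightarrow> bool" where
  "interval_graph V E \<longleftrightarrow> simple_graph V E \<and> (\<exists>I. interval_rep V E I)"

definition imp_at :: "'a set \<Rightarrow> ('a \<Rightarrow> real set) \<Rightarrow> 'a \<Rightarrow> nat" where
  "imp_at V I z = card {w \<in> V - {z}. I w \<subseteq> I z}"

definition imp_rep :: "'a set \<Rightarrow> ('a \<Rightarrow> real set) \<Rightarrow> nat" where
  "imp_rep V I = Max (imp_at V I ` V)"

definition imp_graph :: "'a set \<Rightarrow> ('a \<Rightarrow> 'a \<Rightarrow> bool) \<Rightarrow> nat" where
  "imp_graph V E = (LEAST k. \<exists>I. interval_rep V E I \<and> imp_rep V I = k)"

definition local_comps :: "'a set \<Rightarrow> ('a \<Rightarrow> 'a \<Rightarrow> bool) \<Rightarrow> 'a \<Rightarrow> 'a set set" where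
  "local_comps V E z = components_in E (V - {z})"

definition exterior :: "('a \<Rightarrow> 'a \<Rightarrow> bool) \<Rightarrow> 'a \<Rightarrow> 'a set \<Rightarrow> bool" where
  "exterior E z C \<longleftrightarrow> (\<exists>v\<in>C. \<not> E z v)"

text \<open>Weight: sum of the (n-2) smallest orders among non-exterior local components,
  where n is the number of local components (nat subtraction: 0 if n \<le> 2).\<close>
definition wt :: "'a set \<Rightarrow> ('a \<Rightarrow> 'a \<Rightarrow> bool) \<Rightarrow> 'a \<Rightarrow> nat" where
  "wt V E z =
    (let LC = local_comps V E z;
         n = card LC;
         orders = sorted_list_of_multiset
                    (image_mset card (mset_set {C \<in> LC. \<not> exterior E z C}))
     in sum_list (take (n - 2) orders))"

end

theory Submission
  imports Defs
begin

text \<open>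
  Fix an interval representation I of G with I z = [a,b].  Every local
  component at z contains a neighbour of z (G is connected), and the intervals of one
  component cover a connected part of the line.  Hence a component none of whose
  intervals contains a or b has all its intervals inside [a,b].  Intervals of distinct
  components are disjoint, so at most one component covers a and at most one covers b.
  Thus all but at most two local components are inner (lie inside I z); inner components
  are non-exterior, and their vertices are counted by the impropriety at z.  If there
  are n local components, at least n - 2 of them are inner, so their total order is at
  least the sum of the n - 2 smallest orders of non-exterior components, i.e. wt z.
\<close>

lemma sorted_nth_le_bound:
  fixes xs :: "'a::linorder list"
  assumes "sorted xs" and "k < length (filter (\<lambda>x. x \<le> m) xs)"
  shows "k < length xs \<and> xs ! k \<le> m"
proof (rule ccontr)
  assume "\<not> (k < length xs \<and> xs ! k \<le> m)"
  then consider "length xs \<le> k" | "k < length xs" "m < xs ! k" by fastforce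
  then have "length (filter (\<lambda>x. x \<le> m) xs) \<le> k"
  proof cases
    case 1
    then show ?thesis using length_filter_le order_trans by blast
  next
    case 2
    have "\<not> y \<le> m" if "y \<in> set (drop k xs)" for y
    proof -
      obtain j where "j < length (drop k xs)" "y = drop k xs ! j"
        using \<open>y \<in> set (drop k xs)\<close> by (metis in_set_conv_nth)
      then have "k + j < length xs" "y = xs ! (k + j)" by auto
      then have "xs ! k \<le> y" using assms(1) by (simp add: sorted_nth_mono)
      then show ?thesis using 2 by simp
    qed
    then have "filter (\<lambda>x. x \<le> m) xs = filter (\<lambda>x. x \<le> m) (take k xs)"
      by (metis append_Nil2 append_take_drop_id filter_append filter_False)
    then show ?thesis by (metis length_filter_le length_take min.bounded_iff)
  qed
  then show False using assms(2) by simp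
qed

text \<open>This is how the weight (a sum of smallest
  orders) is compared with the number of vertices in a chosen family of components.\<close>
lemma sum_smallest_le_sum_submultiset:
  fixes M N :: "'a::{linorder, canonically_ordered_monoid_add} multiset"
  assumes "N \<subseteq># M" and "k \<le> size N"
  shows "sum_list (take k (sorted_list_of_multiset M)) \<le> sum_mset N"
  using assms
proof (induction k arbitrary: N)
  case 0
  then show ?case by simp
next
  case (Suc k)
  define xs where "xs = sorted_list_of_multiset M"
  define m where "m = Max (set_mset N)"
  have "N \<noteq> {#}" using Suc.prems(2) by auto
  then have "m \<in># N" unfolding m_def by simp
  then obtain N' where N': "N = add_mset m N'" by (metis mset_add)
  have IH: "sum_list (take k xs) \<le> sum_mset N'"
    using Suc.IH[of N'] Suc.prems N' unfolding xs_def
    by (metis add_mset_add_single mset_subset_eq_add_left size_add_mset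
              Suc_le_mono subset_mset.order_trans)
  have "filter_mset (\<lambda>x. x \<le> m) N = N" by (simp add: m_def filter_mset_eq_conv)
  then have "N = filter_mset (\<lambda>x. x \<le> m) N" ..
  also have "\<dots> \<subseteq># filter_mset (\<lambda>x. x \<le> m) (mset xs)"
    using Suc.prems(1) unfolding xs_def by (simp add: multiset_filter_mono)
  finally have "Suc k \<le> length (filter (\<lambda>x. x \<le> m) xs)"
    using Suc.prems(2) by (metis le_trans mset_filter size_mset size_mset_mono)
  then have kth: "k < length xs \<and> xs ! k \<le> m"
    using sorted_nth_le_bound[of xs k m] unfolding xs_def by simp
  then have "sum_list (take (Suc k) xs) = sum_list (take k xs) + xs ! k"
    by (simp add: take_Suc_conv_app_nth)
  also have "\<dots> \<le> sum_mset N' + m" using IH kth by (simp add: add_mono)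
  also have "\<dots> = sum_mset N" using N' by (simp add: add.commute)
  finally show ?case unfolding xs_def .
qed

lemma reach_in_step: "E x y \<Longrightarrow> x \<in> S \<Longrightarrow> y \<in> S \<Longrightarrow> reach_in E S x y"
  unfolding reach_in_def by (simp add: r_into_rtranclp)

lemma reach_in_trans: "reach_in E S x y \<Longrightarrow> reach_in E S y w \<Longrightarrow> reach_in E S x w"
  unfolding reach_in_def by (rule rtranclp_trans)

lemma reach_in_sym:
  assumes "symp E" and "reach_in E S x y"
  shows "reach_in E S y x"
proof -
  have "symp (\<lambda>x y. x \<in> S \<and> y \<in> S \<and> E x y)" using assms(1) by (auto simp: symp_def)
  then show ?thesis
    using assms(2) unfolding reach_in_def by (blast dest: sympD[OF symp_rtranclp])
qed

lemma reach_in_induct: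
  assumes "reach_in E S x y" and "P x"
    and "\<And>u v. u \<in> S \<Longrightarrow> v \<in> S \<Longrightarrow> E u v \<Longrightarrow> P u \<Longrightarrow> P v"
  shows "P y"
  using assms(1,2) unfolding reach_in_def
  by (induction rule: rtranclp_induct) (use assms(3) in blast)+

lemma components_in_subset: "C \<in> components_in E S \<Longrightarrow> C \<subseteq> S"
  unfolding components_in_def by auto

lemma finite_components_in: "finite S \<Longrightarrow> finite (components_in E S)"
  unfolding components_in_def by simp

lemma component_nonempty: "C \<in> components_in E S \<Longrightarrow> C \<noteq> {}"
  unfolding components_in_def reach_in_def by auto

lemma component_eq_reach:
  assumes "symp E" and "C \<in> components_in E S" and "x \<in> C"
  shows "C = {y \<in> S. reach_in E S x y}"
proof -
  obtain x0 where x0: "C = {y \<in> S. reach_in E S x0 y}"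
    using assms(2) unfolding components_in_def by blast
  then have "reach_in E S x0 x" using assms(3) by simp
  moreover have "reach_in E S x x0" using reach_in_sym[OF assms(1) calculation] .
  ultimately have "reach_in E S x0 y \<longleftrightarrow> reach_in E S x y" for y
    using reach_in_trans by metis
  then show ?thesis unfolding x0 by simp
qed

lemma components_in_disjoint:
  assumes "symp E" and "C \<in> components_in E S" "D \<in> components_in E S"
    and "x \<in> C" "x \<in> D"
  shows "C = D"
  using component_eq_reach[OF assms(1,2,4)] component_eq_reach[OF assms(1,3,5)] by simp

lemma component_closed:
  assumes "symp E" and "C \<in> components_in E S"
    and "u \<in> C" "v \<in> S" "E u v"
  shows "v \<in> C"
proof -
  have "u \<in> S" using components_in_subset assms(2,3) by blast
  then have "reach_in E S u v" using reach_in_step assms(4,5) by metis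
  then show ?thesis using component_eq_reach[OF assms(1-3)] assms(4) by blast
qed

text \<open>In a connected graph, every local component at z contains a neighbour of z:
  a path from z into the component must enter it through an edge, and that edge can
  only start at z.\<close>
lemma local_component_has_neighbour:
  assumes "connected_graph V E" and "symp E" and "z \<in> V"
    and "C \<in> local_comps V E z"
  shows "\<exists>c\<in>C. E z c"
proof (rule ccontr)
  assume no_nb: "\<not> (\<exists>c\<in>C. E z c)"
  have C: "C \<in> components_in E (V - {z})" using assms(4) by (simp add: local_comps_def)
  obtain x where "x \<in> C" using component_nonempty[OF C] by blast
  then have "x \<in> V" "z \<notin> C" using components_in_subset[OF C] by auto
  then have "reach_in E V z x" using assms(1,3) unfolding connected_graph_def by blast
  then have "x \<notin> C"
  proof (rule reach_in_induct)
    show "z \<notin> C" by fact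
  next
    fix u v assume "u \<in> V" "v \<in> V" "E u v" "u \<notin> C"
    show "v \<notin> C"
    proof
      assume "v \<in> C"
      with no_nb have "u \<noteq> z" using \<open>E u v\<close> by blast
      then have "u \<in> C"
        using component_closed[OF assms(2) C \<open>v \<in> C\<close>] \<open>u \<in> V\<close> \<open>E u v\<close> assms(2)
        by (auto dest: sympD)
      with \<open>u \<notin> C\<close> show False by contradiction
    qed
  qed
  with \<open>x \<in> C\<close> show False by contradiction
qed

lemma simple_graph_symp: "simple_graph V E \<Longrightarrow> symp E"
  unfolding simple_graph_def symp_def by blast

lemma simple_graph_irrefl: "simple_graph V E \<Longrightarrow> \<not> E x x"
  unfolding simple_graph_def by blast

lemma interval_rep_interval:
  "interval_rep V E I \<Longrightarrow> v \<in> V \<Longrightarrow> \<exists>c d. c \<le> d \<and> I v = {c..d}"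
  unfolding interval_rep_def by blast

lemma interval_rep_adj:
  "interval_rep V E I \<Longrightarrow> v \<in> V \<Longrightarrow> w \<in> V \<Longrightarrow> v \<noteq> w \<Longrightarrow> E v w \<longleftrightarrow> I v \<inter> I w \<noteq> {}"
  unfolding interval_rep_def by blast

lemma interval_trapped:
  fixes a b c d p :: real
  assumes "p \<in> {a..b}" "p \<in> {c..d}" "a \<notin> {c..d}" "b \<notin> {c..d}"
  shows "{c..d} \<subseteq> {a..b}"
  using assms by auto

lemma neighbour_interval_trapped:
  assumes "interval_rep V E I" and "u \<in> V" "v \<in> V" "E u v" "u \<noteq> v"
    and "I u \<subseteq> {a..b}" "a \<notin> I v" "b \<notin> I v"
  shows "I v \<subseteq> {a..b}"
proof -
  obtain c d where cd: "I v = {c..d}" using interval_rep_interval[OF assms(1,3)] by blast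
  obtain p where "p \<in> I u" "p \<in> I v"
    using interval_rep_adj[OF assms(1-3,5)] assms(4) by blast
  then show ?thesis using interval_trapped[of p a b c d] assms(6-8) cd by auto
qed

text \<open>If a local component at z contains a neighbour of z and none of its intervals
  contains an endpoint of I z, then all of its intervals lie inside I z; the trapping
  propagates along paths of the component.\<close>
lemma component_trapped:
  assumes "simple_graph V E" "interval_rep V E I" and "z \<in> V" "I z = {a..b}"
    and C: "C \<in> components_in E (V - {z})" and "c0 \<in> C" "E z c0"
    and avoid: "\<forall>w\<in>C. a \<notin> I w \<and> b \<notin> I w"
  shows "\<forall>v\<in>C. I v \<subseteq> I z"
proof
  have sym: "symp E" using simple_graph_symp[OF assms(1)] .
  have CV: "C \<subseteq> V - {z}" using components_in_subset[OF C] .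
  fix v assume "v \<in> C"
  then have "reach_in E (V - {z}) c0 v" using component_eq_reach[OF sym C \<open>c0 \<in> C\<close>] by blast
  then have "v \<in> C \<and> I v \<subseteq> {a..b}"
  proof (rule reach_in_induct)
    show "c0 \<in> C \<and> I c0 \<subseteq> {a..b}"
      using neighbour_interval_trapped[OF assms(2,3), of c0 a b] assms(4,6,7) CV avoid
        simple_graph_irrefl[OF assms(1)] by blast
  next
    fix u w assume "u \<in> V - {z}" "w \<in> V - {z}" "E u w" "u \<in> C \<and> I u \<subseteq> {a..b}"
    moreover then have "w \<in> C" using component_closed[OF sym C] by blast
    moreover have "u \<noteq> w" using \<open>E u w\<close> simple_graph_irrefl[OF assms(1)] by blast
    ultimately show "w \<in> C \<and> I w \<subseteq> {a..b}"
      using neighbour_interval_trapped[OF assms(2), of u w a b] avoid by blast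
  qed
  then show "I v \<subseteq> I z" using assms(4) by simp
qed

text \<open>Two components whose intervals share a point coincide: vertices with
  intersecting intervals are adjacent.  Hence each point of the line is covered by the
  intervals of at most one component.\<close>
lemma components_sharing_point:
  assumes "simple_graph V E" "interval_rep V E I" and "S \<subseteq> V"
    and C1: "C1 \<in> components_in E S" and C2: "C2 \<in> components_in E S"
    and "w1 \<in> C1" "w2 \<in> C2" "p \<in> I w1" "p \<in> I w2"
  shows "C1 = C2"
proof (cases "w1 = w2")
  case True
  then show ?thesis using components_in_disjoint[OF simple_graph_symp[OF assms(1)] C1 C2] assms(6,7) by blast
next
  case False
  have "w1 \<in> S" "w2 \<in> S" using components_in_subset C1 C2 assms(6,7) by blast+
  then have "E w1 w2" using interval_rep_adj[OF assms(2), of w1 w2] False assms(3,8,9) by blast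
  then have "w2 \<in> C1" using component_closed[OF simple_graph_symp[OF assms(1)] C1] assms(6) \<open>w2 \<in> S\<close> by blast
  then show ?thesis using components_in_disjoint[OF simple_graph_symp[OF assms(1)] C1 C2] assms(7) by blast
qed

lemma card_components_at_point:
  assumes "simple_graph V E" "interval_rep V E I" and "S \<subseteq> V"
  shows "card {C \<in> components_in E S. \<exists>w\<in>C. p \<in> I w} \<le> 1"
proof -
  have "finite S" using assms(1,3) finite_subset unfolding simple_graph_def by blast
  then have "finite {C \<in> components_in E S. \<exists>w\<in>C. p \<in> I w}"
    using finite_components_in[of S E] by simp
  moreover have "C1 = C2" if "C1 \<in> {C \<in> components_in E S. \<exists>w\<in>C. p \<in> I w}"
    and "C2 \<in> {C \<in> components_in E S. \<exists>w\<in>C. p \<in> I w}" for C1 C2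
    using that components_sharing_point[OF assms] by blast
  ultimately show ?thesis by (simp add: card_le_Suc0_iff_eq)
qed

text \<open>The inner local components at z: those all of whose intervals are contained in I z.
  Each of their vertices contributes to the impropriety of z.\<close>
definition inner_comps :: "'a set \<Rightarrow> ('a \<Rightarrow> 'a \<Rightarrow> bool) \<Rightarrow> ('a \<Rightarrow> real set) \<Rightarrow> 'a \<Rightarrow> 'a set set" where
  "inner_comps V E I z = {C \<in> local_comps V E z. \<forall>v\<in>C. I v \<subseteq> I z}"

text \<open>All local components except at most two (the ones covering an endpoint of I z)
  are inner.\<close>
lemma card_local_comps_le_inner:
  assumes "simple_graph V E" "connected_graph V E" "interval_rep V E I" and "z \<in> V"
  shows "card (local_comps V E z) \<le> card (inner_comps V E I z) + 2"
proof -
  obtain a b where ab: "I z = {a..b}" using interval_rep_interval[OF assms(3,4)] by blast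
  define LC where "LC = local_comps V E z"
  define through where "through p = {C \<in> LC. \<exists>w\<in>C. p \<in> I w}" for p
  have LC: "LC = components_in E (V - {z})" by (simp add: LC_def local_comps_def)
  have finLC: "finite LC"
    using assms(1) finite_components_in unfolding LC simple_graph_def by blast
  have through_le: "card (through p) \<le> 1" for p
    using card_components_at_point[OF assms(1,3), of "V - {z}" p] unfolding through_def LC by blast
  have "C \<in> inner_comps V E I z" if C: "C \<in> LC" "C \<notin> through a" "C \<notin> through b" for C
  proof -
    obtain c0 where "c0 \<in> C" "E z c0"
      using local_component_has_neighbour[OF assms(2) simple_graph_symp[OF assms(1)] assms(4)]
        C(1) unfolding LC_def by blast
    then have "\<forall>v\<in>C. I v \<subseteq> I z"
      using component_trapped[OF assms(1,3,4) ab, of C c0] C unfolding through_def LC by blast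
    then show ?thesis using C(1) unfolding inner_comps_def LC_def by blast
  qed
  then have "LC \<subseteq> inner_comps V E I z \<union> through a \<union> through b" by blast
  then have "card LC \<le> card (inner_comps V E I z \<union> through a \<union> through b)"
    using finLC by (intro card_mono) (auto simp: inner_comps_def through_def LC_def)
  also have "\<dots> \<le> card (inner_comps V E I z) + card (through a) + card (through b)"
    by (meson card_Un_le add_le_mono1 order_trans)
  finally show ?thesis using through_le[of a] through_le[of b] unfolding LC_def by linarith
qed

text \<open>Inner components are not exterior, since every vertex of them is adjacent to z.\<close>
lemma inner_comp_not_exterior:
  assumes "interval_rep V E I" "z \<in> V" and "C \<in> inner_comps V E I z"
  shows "\<not> exterior E z C"
proof -
  have "E z v" if "v \<in> C" for v
  proof -
    have "v \<in> V - {z}"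
      using assms(3) that components_in_subset unfolding inner_comps_def local_comps_def by blast
    moreover have "I v \<subseteq> I z" using assms(3) that unfolding inner_comps_def by blast
    moreover have "I v \<noteq> {}" using interval_rep_interval[OF assms(1)] \<open>v \<in> V - {z}\<close> by fastforce
    ultimately show ?thesis using interval_rep_adj[OF assms(1,2)] by blast
  qed
  then show ?thesis unfolding exterior_def by blast
qed

text \<open>The inner components are disjoint sets of vertices w with I w inside I z,
  so their total order is at most the impropriety at z.\<close>
lemma sum_card_inner_le_imp_at:
  assumes "simple_graph V E"
  shows "sum card (inner_comps V E I z) \<le> imp_at V I z"
proof -
  have finV: "finite V" using assms unfolding simple_graph_def by blast
  have sub: "C \<subseteq> V - {z}" if "C \<in> inner_comps V E I z" for C
    using that components_in_subset unfolding inner_comps_def local_comps_def by blast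
  have "sum card (inner_comps V E I z) = card (\<Union> (inner_comps V E I z))"
  proof (rule card_Union_disjoint[symmetric])
    show "pairwise disjnt (inner_comps V E I z)"
      using components_in_disjoint[OF simple_graph_symp[OF assms]]
      unfolding pairwise_def disjnt_def inner_comps_def local_comps_def by blast
    show "finite C" if "C \<in> inner_comps V E I z" for C
      using sub[OF that] finV finite_subset by blast
  qed
  also have "\<dots> \<le> card {w \<in> V - {z}. I w \<subseteq> I z}"
    using sub finV by (intro card_mono) (auto simp: inner_comps_def)
  finally show ?thesis unfolding imp_at_def .
qed

lemma wt_le_sum_card:
  assumes "finite V"
    and "F \<subseteq> {C \<in> local_comps V E z. \<not> exterior E z C}"
    and "card (local_comps V E z) \<le> card F + 2"
  shows "wt V E z \<le> sum card F"
proof -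
  let ?NE = "{C \<in> local_comps V E z. \<not> exterior E z C}"
  have "finite (local_comps V E z)"
    using assms(1) finite_components_in unfolding local_comps_def by blast
  then have finNE: "finite ?NE" by simp
  have "wt V E z = sum_list (take (card (local_comps V E z) - 2)
                      (sorted_list_of_multiset (image_mset card (mset_set ?NE))))"
    unfolding wt_def Let_def by simp
  also have "\<dots> \<le> sum_mset (image_mset card (mset_set F))"
  proof (rule sum_smallest_le_sum_submultiset)
    show "image_mset card (mset_set F) \<subseteq># image_mset card (mset_set ?NE)"
      by (intro image_mset_subseteq_mono subset_imp_msubset_mset_set assms(2) finNE)
    show "card (local_comps V E z) - 2 \<le> size (image_mset card (mset_set F))"
      using assms(3) finite_subset[OF assms(2) finNE] by simp
  qed
  also have "\<dots> = sum card F" by (simp add: sum_unfold_sum_mset)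
  finally show ?thesis .
qed

lemma wt_le_imp_rep:
  assumes "simple_graph V E" "connected_graph V E" "interval_rep V E I" and "z \<in> V"
  shows "wt V E z \<le> imp_rep V I"
proof -
  have finV: "finite V" using assms(1) unfolding simple_graph_def by blast
  have "wt V E z \<le> sum card (inner_comps V E I z)"
  proof (rule wt_le_sum_card[OF finV])
    show "inner_comps V E I z \<subseteq> {C \<in> local_comps V E z. \<not> exterior E z C}"
      using inner_comp_not_exterior[OF assms(3,4)] by (auto simp: inner_comps_def)
    show "card (local_comps V E z) \<le> card (inner_comps V E I z) + 2"
      using card_local_comps_le_inner[OF assms] .
  qed
  also have "\<dots> \<le> imp_at V I z" using sum_card_inner_le_imp_at[OF assms(1)] .
  also have "\<dots> \<le> imp_rep V I" unfolding imp_rep_def using finV assms(4) by simp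
  finally show ?thesis .
qed

lemma imp_graph_attained:
  assumes "interval_graph V E"
  shows "\<exists>I. interval_rep V E I \<and> imp_rep V I = imp_graph V E"
  unfolding imp_graph_def
proof (rule LeastI_ex)
  show "\<exists>k I. interval_rep V E I \<and> imp_rep V I = k"
    using assms unfolding interval_graph_def by blast
qed

theorem theorem2p2:
  fixes V :: "'a set" and E :: "'a \<Rightarrow> 'a \<Rightarrow> bool" and z :: 'a
  assumes "interval_graph V E"
    and "connected_graph V E"
    and "z \<in> V"
  shows "imp_graph V E \<ge> wt V E z"
proof -
  obtain I where "interval_rep V E I" "imp_rep V I = imp_graph V E"
    using imp_graph_attained[OF assms(1)] by blast
  moreover have "simple_graph V E" using assms(1) unfolding interval_graph_def by blast
  ultimately show ?thesis using wt_le_imp_rep assms(2,3) by metis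
qed

end
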